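(* Let $d\ge1$ and let $X_1,\dots,X_d$ be non-negative integrable random variables such that $\mathbb{P}(X_i>t,X_j>t)\le\mathbb{P}(X_i>t)\mathbb{P}(X_j>t)$ for all $i\neq j\in[d]$ and all $t>0$. Let $\tilde X_1,\dots,\tilde X_d$ be mutually independent with $\tilde X_i$ equal in distribution to $X_i$. Then $\mathbb{E}\max_{i\in[d]}X_i\ge\frac12\mathbb{E}\max_{i\in[d]}\tilde X_i$.
   Context: $[d]=\{1,\dots,d\}$. *)

theory Defs
  imports "HOL-Probability.Probability"
begin

end

theory Submission
  imports Defs
begin

(* For t > 0 let S be the sum of the tail probabilities P(X_i > t). Since the tail events are
   pairwise negatively correlated, the second-moment (Chung-Erdos) bound gives
   P(max X_i > t) \<ge> S / (1 + S), while the union bound gives P(max Y_i > t) \<le> min 1 S.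
   As min 1 S \<le> 2 S / (1 + S), the tails of max Y_i are at most twice those of max X_i,
   and integrating over t > 0 (layer cake formula) compares the expectations.
   Independence of the Y_i enters only through their measurability. *)

lemma nn_integral_layer_cake:
  fixes f :: "'a \<Rightarrow> real"
  assumes "sigma_finite_measure M" and f[measurable]: "f \<in> borel_measurable M"
  shows "(\<integral>\<^sup>+x. ennreal (f x) \<partial>M) =
    (\<integral>\<^sup>+t. indicator {0<..} t * emeasure M {x\<in>space M. t < f x} \<partial>lborel)"
proof -
  interpret pair_sigma_finite lborel M
    using assms(1) by (simp add: pair_sigma_finite_def lborel.sigma_finite_measure_axioms)
  have pointwise: "ennreal (f x) = (\<integral>\<^sup>+t. indicator {0<..} t * indicator {t. t < f x} t \<partial>lborel)"
    for x
  proof -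
    have "(\<integral>\<^sup>+t. indicator {0<..} t * indicator {t. t < f x} t \<partial>lborel)
        = (\<integral>\<^sup>+t. indicator {0<..<f x} t \<partial>lborel)"
      by (intro nn_integral_cong) (auto simp: indicator_def)
    also have "\<dots> = ennreal (f x)"
      by (cases "0 < f x") (auto simp: ennreal_neg)
    finally show ?thesis by simp
  qed
  have "(\<integral>\<^sup>+x. ennreal (f x) \<partial>M) =
     (\<integral>\<^sup>+x. (\<integral>\<^sup>+t. indicator {0<..} t * indicator {t. t < f x} t \<partial>lborel) \<partial>M)"
    by (simp add: pointwise[symmetric])
  also have "\<dots> = (\<integral>\<^sup>+t. (\<integral>\<^sup>+x. indicator {0<..} t * indicator {t. t < f x} t \<partial>M) \<partial>lborel)"
    by (rule Fubini'[where f="\<lambda>t x. indicator {0<..} t * indicator {t. t < f x} t"]) measurable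
  also have "\<dots> = (\<integral>\<^sup>+t. indicator {0<..} t * emeasure M {x\<in>space M. t < f x} \<partial>lborel)"
  proof (intro nn_integral_cong)
    fix t :: real
    have "(\<integral>\<^sup>+x. indicator {0<..} t * indicator {t. t < f x} t \<partial>M) =
       (\<integral>\<^sup>+x. indicator {0<..} t * indicator {x\<in>space M. t < f x} x \<partial>M)"
      by (intro nn_integral_cong) (auto simp: indicator_def)
    also have "\<dots> = indicator {0<..} t * emeasure M {x\<in>space M. t < f x}"
      by (rule nn_integral_cmult_indicator) measurable
    finally show "(\<integral>\<^sup>+x. indicator {0<..} t * indicator {t. t < f x} t \<partial>M)
        = indicator {0<..} t * emeasure M {x\<in>space M. t < f x}" .
  qed
  finally show ?thesis .
qed

lemma integral_le_of_tail_le: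
  fixes f :: "'a \<Rightarrow> real" and g :: "'b \<Rightarrow> real"
  assumes "finite_measure M" and "finite_measure N"
    and [measurable]: "f \<in> borel_measurable M" "g \<in> borel_measurable N"
    and "integrable M f" and f_nonneg: "AE x in M. 0 \<le> f x" and "0 \<le> c"
    and tail: "\<And>t. 0 < t \<Longrightarrow>
      measure N {x\<in>space N. t < g x} \<le> c * measure M {x\<in>space M. t < f x}"
  shows "(\<integral>x. g x \<partial>N) \<le> c * (\<integral>x. f x \<partial>M)"
proof (rule integral_real_bounded)
  interpret M: finite_measure M by fact
  interpret N: finite_measure N by fact
  have "(\<integral>\<^sup>+x. ennreal (g x) \<partial>N) =
      (\<integral>\<^sup>+t. indicator {0<..} t * emeasure N {x\<in>space N. t < g x} \<partial>lborel)"
    by (rule nn_integral_layer_cake) (auto simp: N.sigma_finite_measure_axioms)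
  also have "\<dots> \<le> (\<integral>\<^sup>+t. c * (indicator {0<..} t * emeasure M {x\<in>space M. t < f x}) \<partial>lborel)"
  proof (rule nn_integral_mono)
    fix t :: real
    show "indicator {0<..} t * emeasure N {x\<in>space N. t < g x}
        \<le> c * (indicator {0<..} t * emeasure M {x\<in>space M. t < f x})"
      using tail[of t] \<open>0 \<le> c\<close>
      by (cases "0 < t") (auto simp: N.emeasure_eq_measure M.emeasure_eq_measure
          ennreal_mult[symmetric] intro: ennreal_leI)
  qed
  also have "\<dots> = c * (\<integral>\<^sup>+x. ennreal (f x) \<partial>M)"
    by (subst nn_integral_cmult) (auto simp: nn_integral_layer_cake M.sigma_finite_measure_axioms)
  also have "\<dots> = ennreal (c * (\<integral>x. f x \<partial>M))"
    using assms f_nonneg by (simp add: nn_integral_eq_integral integral_nonneg_AE ennreal_mult)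
  finally show "(\<integral>\<^sup>+x. ennreal (g x) \<partial>N) \<le> ennreal (c * (\<integral>x. f x \<partial>M))" .
  show "0 \<le> c * (\<integral>x. f x \<partial>M)"
    using \<open>0 \<le> c\<close> f_nonneg by (simp add: integral_nonneg_AE)
qed

lemma (in prob_space) prob_UN_ge_second_moment:
  fixes A :: "'i \<Rightarrow> 'a set" and a :: real
  assumes "finite I" and A: "\<And>i. i \<in> I \<Longrightarrow> A i \<in> events"
  shows "2 * a * (\<Sum>i\<in>I. prob (A i)) - a\<^sup>2 * (\<Sum>i\<in>I. \<Sum>j\<in>I. prob (A i \<inter> A j))
    \<le> prob (\<Union>i\<in>I. A i)"
proof -
  define n where "n \<omega> = (\<Sum>i\<in>I. indicator (A i) \<omega> :: real)" for \<omega>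
  have U: "(\<Union>i\<in>I. A i) \<in> events" using assms by blast
  have int_ind: "integrable M (indicator B :: 'a \<Rightarrow> real)" if "B \<in> events" for B
    using that by (simp add: less_top[symmetric])
  have exp_ind: "expectation (indicator B) = prob B" if "B \<in> events" for B
    using that by (simp add: Int_absorb2 sets.sets_into_space)
  have n_sq: "(n \<omega>)\<^sup>2 = (\<Sum>i\<in>I. \<Sum>j\<in>I. indicator (A i \<inter> A j) \<omega>)" for \<omega>
    unfolding n_def power2_eq_square sum_product by (simp add: indicator_inter_arith)
  have pointwise: "2 * a * n \<omega> - a\<^sup>2 * (n \<omega>)\<^sup>2 \<le> indicator (\<Union>i\<in>I. A i) \<omega>" for \<omega>
  proof (cases "\<omega> \<in> (\<Union>i\<in>I. A i)")
    case True
    have "2 * a * n \<omega> - a\<^sup>2 * (n \<omega>)\<^sup>2 = 1 - (a * n \<omega> - 1)\<^sup>2"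
      by (simp add: power2_eq_square algebra_simps)
    then show ?thesis using True by simp
  next
    case False
    then have "n \<omega> = 0" unfolding n_def by (auto intro!: sum.neutral)
    then show ?thesis by simp
  qed
  have int_n: "integrable M n"
    unfolding n_def using A by (auto intro!: Bochner_Integration.integrable_sum int_ind)
  have int_n_sq: "integrable M (\<lambda>\<omega>. (n \<omega>)\<^sup>2)"
    unfolding n_sq using A by (auto intro!: Bochner_Integration.integrable_sum int_ind)
  have "expectation n = (\<Sum>i\<in>I. prob (A i))"
    unfolding n_def using A by (simp add: Bochner_Integration.integral_sum int_ind exp_ind)
  moreover have "expectation (\<lambda>\<omega>. (n \<omega>)\<^sup>2) = (\<Sum>i\<in>I. \<Sum>j\<in>I. prob (A i \<inter> A j))"
    unfolding n_sq using A by (simp add: Bochner_Integration.integral_sum int_ind exp_ind)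
  ultimately have "2 * a * (\<Sum>i\<in>I. prob (A i)) - a\<^sup>2 * (\<Sum>i\<in>I. \<Sum>j\<in>I. prob (A i \<inter> A j))
      = expectation (\<lambda>\<omega>. 2 * a * n \<omega> - a\<^sup>2 * (n \<omega>)\<^sup>2)"
    using int_n int_n_sq by simp
  also have "\<dots> \<le> expectation (indicator (\<Union>i\<in>I. A i))"
    using int_n int_n_sq U by (intro integral_mono pointwise int_ind) auto
  also have "\<dots> = prob (\<Union>i\<in>I. A i)"
    using U by (rule exp_ind)
  finally show ?thesis .
qed

lemma (in prob_space) prob_UN_ge_negatively_correlated:
  assumes "finite I" and A: "\<And>i. i \<in> I \<Longrightarrow> A i \<in> events"
    and neg: "\<And>i j. i \<in> I \<Longrightarrow> j \<in> I \<Longrightarrow> i \<noteq> j \<Longrightarrow> prob (A i \<inter> A j) \<le> prob (A i) * prob (A j)"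
  shows "(\<Sum>i\<in>I. prob (A i)) / (1 + (\<Sum>i\<in>I. prob (A i))) \<le> prob (\<Union>i\<in>I. A i)"
proof -
  define S where "S = (\<Sum>i\<in>I. prob (A i))"
  define a where "a = 1 / (1 + S)"
  have "S \<ge> 0" unfolding S_def by (simp add: sum_nonneg)
  have "(\<Sum>i\<in>I. \<Sum>j\<in>I. prob (A i \<inter> A j))
      \<le> (\<Sum>i\<in>I. \<Sum>j\<in>I. prob (A i) * prob (A j) + (if i = j then prob (A i) else 0))"
    using neg by (intro sum_mono) (auto simp: measure_nonneg)
  also have "\<dots> = S\<^sup>2 + S"
    unfolding S_def power2_eq_square sum_product using \<open>finite I\<close> by (simp add: sum.distrib)
  finally have pairs: "(\<Sum>i\<in>I. \<Sum>j\<in>I. prob (A i \<inter> A j)) \<le> S\<^sup>2 + S" .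
  have "a * (1 + S) = 1"
    using \<open>S \<ge> 0\<close> unfolding a_def by simp
  moreover have "2 * a * S - a\<^sup>2 * (S\<^sup>2 + S) = a * S * (2 - a * (1 + S))"
    by (simp add: power2_eq_square algebra_simps)
  ultimately have "2 * a * S - a\<^sup>2 * (S\<^sup>2 + S) = a * S"
    by simp
  then have "S / (1 + S) = 2 * a * S - a\<^sup>2 * (S\<^sup>2 + S)"
    unfolding a_def by simp
  also have "\<dots> \<le> 2 * a * S - a\<^sup>2 * (\<Sum>i\<in>I. \<Sum>j\<in>I. prob (A i \<inter> A j))"
    using pairs by (simp add: mult_left_mono)
  also have "\<dots> \<le> prob (\<Union>i\<in>I. A i)"
    unfolding S_def using assms(1) A by (rule prob_UN_ge_second_moment)
  finally show ?thesis unfolding S_def .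
qed

lemma exceedance_le_twice_of_negatively_correlated:
  fixes X :: "'i \<Rightarrow> 'a \<Rightarrow> real" and Y :: "'i \<Rightarrow> 'b \<Rightarrow> real"
  assumes "prob_space M" and "prob_space N" and "finite I"
    and [measurable]: "\<And>i. i \<in> I \<Longrightarrow> X i \<in> borel_measurable M"
      "\<And>i. i \<in> I \<Longrightarrow> Y i \<in> borel_measurable N"
    and same_distr: "\<And>i. i \<in> I \<Longrightarrow> distr N borel (Y i) = distr M borel (X i)"
    and neg: "\<And>i j. i \<in> I \<Longrightarrow> j \<in> I \<Longrightarrow> i \<noteq> j \<Longrightarrow>
      measure M {\<omega>\<in>space M. t < X i \<omega> \<and> t < X j \<omega>}
        \<le> measure M {\<omega>\<in>space M. t < X i \<omega>} * measure M {\<omega>\<in>space M. t < X j \<omega>}"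
  shows "measure N {\<omega>\<in>space N. \<exists>i\<in>I. t < Y i \<omega>} \<le> 2 * measure M {\<omega>\<in>space M. \<exists>i\<in>I. t < X i \<omega>}"
proof -
  interpret M: prob_space M by fact
  interpret N: prob_space N by fact
  define S where "S = (\<Sum>i\<in>I. measure M {\<omega>\<in>space M. t < X i \<omega>})"
  have "S \<ge> 0" unfolding S_def by (simp add: sum_nonneg)
  have same_tail: "measure N {\<omega>\<in>space N. t < Y i \<omega>} = measure M {\<omega>\<in>space M. t < X i \<omega>}"
    if "i \<in> I" for i
  proof -
    have "measure N {\<omega>\<in>space N. t < Y i \<omega>} = measure (distr N borel (Y i)) {t<..}"
      using that by (subst measure_distr) (auto intro!: arg_cong[where f="measure N"])
    also have "\<dots> = measure (distr M borel (X i)) {t<..}"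
      using same_distr[OF that] by simp
    also have "\<dots> = measure M {\<omega>\<in>space M. t < X i \<omega>}"
      using that by (subst measure_distr) (auto intro!: arg_cong[where f="measure M"])
    finally show ?thesis .
  qed
  have "measure N {\<omega>\<in>space N. \<exists>i\<in>I. t < Y i \<omega>} = measure N (\<Union>i\<in>I. {\<omega>\<in>space N. t < Y i \<omega>})"
    by (intro arg_cong[where f="measure N"]) auto
  also have "\<dots> \<le> S"
    unfolding S_def using \<open>finite I\<close>
    by (auto simp: same_tail[symmetric] intro!: N.finite_measure_subadditive_finite)
  finally have "measure N {\<omega>\<in>space N. \<exists>i\<in>I. t < Y i \<omega>} \<le> min 1 S"
    by simp
  also have "\<dots> \<le> 2 * (S / (1 + S))"
    using \<open>S \<ge> 0\<close> by (cases "S \<le> 1") (auto simp: field_simps mult_left_le)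
  also have "S / (1 + S) \<le> measure M (\<Union>i\<in>I. {\<omega>\<in>space M. t < X i \<omega>})"
    unfolding S_def
  proof (rule M.prob_UN_ge_negatively_correlated)
    fix i j assume "i \<in> I" "j \<in> I" "i \<noteq> j"
    moreover have "{\<omega>\<in>space M. t < X i \<omega>} \<inter> {\<omega>\<in>space M. t < X j \<omega>}
        = {\<omega>\<in>space M. t < X i \<omega> \<and> t < X j \<omega>}"
      by auto
    ultimately show "measure M ({\<omega>\<in>space M. t < X i \<omega>} \<inter> {\<omega>\<in>space M. t < X j \<omega>})
        \<le> measure M {\<omega>\<in>space M. t < X i \<omega>} * measure M {\<omega>\<in>space M. t < X j \<omega>}"
      using neg by simp
  qed (use \<open>finite I\<close> in auto)
  also have "(\<Union>i\<in>I. {\<omega>\<in>space M. t < X i \<omega>}) = {\<omega>\<in>space M. \<exists>i\<in>I. t < X i \<omega>}"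
    by auto
  finally show ?thesis by simp
qed

theorem corollary13:
  fixes M :: "'a measure" and N :: "'b measure"
    and X :: "nat \<Rightarrow> 'a \<Rightarrow> real" and Y :: "nat \<Rightarrow> 'b \<Rightarrow> real"
    and d :: nat
  assumes "prob_space M" and "prob_space N"
    and "d \<ge> 1"
    and rvX: "\<And>i. i \<in> {1..d} \<Longrightarrow> X i \<in> borel_measurable M"
    and nonneg: "\<And>i \<omega>. i \<in> {1..d} \<Longrightarrow> \<omega> \<in> space M \<Longrightarrow> X i \<omega> \<ge> 0"
    and intX: "\<And>i. i \<in> {1..d} \<Longrightarrow> integrable M (X i)"
    and negdep: "\<And>i j t. i \<in> {1..d} \<Longrightarrow> j \<in> {1..d} \<Longrightarrow> i \<noteq> j \<Longrightarrow> t > 0 \<Longrightarrow>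
        measure M {\<omega> \<in> space M. X i \<omega> > t \<and> X j \<omega> > t}
          \<le> measure M {\<omega> \<in> space M. X i \<omega> > t} * measure M {\<omega> \<in> space M. X j \<omega> > t}"
    and indepY: "prob_space.indep_vars N (\<lambda>_. borel) Y {1..d}"
    and distY: "\<And>i. i \<in> {1..d} \<Longrightarrow> distr N borel (Y i) = distr M borel (X i)"
  shows "(\<integral>\<omega>. (MAX i\<in>{1..d}. X i \<omega>) \<partial>M) \<ge> (1/2) * (\<integral>\<omega>. (MAX i\<in>{1..d}. Y i \<omega>) \<partial>N)"
proof -
  interpret M: prob_space M by fact
  interpret N: prob_space N by fact
  have I: "finite {1..d}" "{1..d} \<noteq> {}"
    using \<open>d \<ge> 1\<close> by auto
  have rvY: "\<And>i. i \<in> {1..d} \<Longrightarrow> Y i \<in> borel_measurable N"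
    using indepY unfolding N.indep_vars_def2 by auto
  have "(\<integral>\<omega>. (MAX i\<in>{1..d}. Y i \<omega>) \<partial>N) \<le> 2 * (\<integral>\<omega>. (MAX i\<in>{1..d}. X i \<omega>) \<partial>M)"
  proof (rule integral_le_of_tail_le)
    show "integrable M (\<lambda>\<omega>. MAX i\<in>{1..d}. X i \<omega>)"
      using I intX by (rule integrable_MAX)
    show "AE \<omega> in M. 0 \<le> (MAX i\<in>{1..d}. X i \<omega>)"
      using I nonneg by (auto intro!: AE_I2 simp: Max_ge_iff)
    show "measure N {\<omega>\<in>space N. t < (MAX i\<in>{1..d}. Y i \<omega>)}
        \<le> 2 * measure M {\<omega>\<in>space M. t < (MAX i\<in>{1..d}. X i \<omega>)}" if "0 < t" for t
      using exceedance_le_twice_of_negatively_correlated[OF assms(1,2) I(1) rvX rvY distY negdep]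
        that I by (simp add: Max_gr_iff)
  qed (use I rvX rvY in \<open>auto intro!: borel_measurable_Max M.finite_measure_axioms N.finite_measure_axioms\<close>)
  then show ?thesis
    by simp
qed

end
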